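(* Let $\Omega>0$ denote the maximum absolute value of the stored quantities, let $C,D$ be column indices of $X\in\mathbb{R}^{K\times d}$ to be compared and $E$ a target column index. Then there exists a single transformer layer that simulates the comparison operation $X[:,E]\leftarrow (X[:,C]<X[:,D])$, i.e. it writes into each entry of column $E$ the value $1$ if the corresponding entry of column $C$ is less than that of column $D$, and $0$ otherwise.
   Context: Conventions: rows/columns indexed from $1$; $X[i,j]$ is the $(i,j)$ entry, $X[:,j]$ the $j$-th column. $\phi(x)=\max\{x,0\}$ entrywise. Hardmax $\sigma$: row $i$ of $\sigma(\Phi)$ is $\frac{1}{|S_i|}\sum_{k\in S_i}e_k$, $S_i=\{k:\Phi_{ik}=\max_j\Phi_{ij}\}$. For a weighted hypergraph with incident matrix $A\in\mathbb{R}^{n_v\times n_e}$ ($A_{ij}=w(e_j)$ if vertex $v_i\in e_j$, else $0$) and $K\ge\max\{n_v,n_e\}+1$, the padded incident matrix $\widetilde A\in\mathbb{R}^{K\times K}$ has $\widetilde A_{i+1,j+1}=A_{ij}$, zeros elsewhere. A transformer layer on $X\in\mathbb{R}^{K\times d}$ is $f(X,\widetilde A)=f_{\mathrm{mlp}}(f_{\mathrm{attn}}(X,\widetilde A))$, $f_{\mathrm{attn}}(X,\widetilde A)=\sum_{i\in M_A}\psi^{(i)}(X,\widetilde A)+\sum_{i\in M_{A^\top}}\psi^{(i)}(X,\widetilde A^\top)+\sum_{i\in M}\psi^{(i)}(X,I_K)+X$, $\psi(X,B)=B\,\sigma(XW_QW_K^\top X^\top)XW_V$ ($W_Q,W_K\in\mathbb{R}^{d\times2}$,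 $W_V\in\mathbb{R}^{d\times d}$), $f_{\mathrm{mlp}}(X)=Z^{(4)}W^{(4)}+X$, $Z^{(1)}=X$, $Z^{(j+1)}=\phi(Z^{(j)}W^{(j)})$ ($j=1,2,3$). Storage convention: scalars in the top row of a column (rest $0$), arrays of length $K-1$ in rows $2,\dots,K$ (top $0$); designated columns $B_{\mathrm{global}}$ (top $1$, rest $0$), $B_{\mathrm{local}}$ (top $0$, rest $1$), and scratchpad columns. "Simulating an operation" means the layer's weights can be chosen so that applying it to $X$ performs the stated update. *)

theory Defs
  imports "Jordan_Normal_Form.Matrix"
begin

text \<open>Matrices are Jordan_Normal_Form matrices, indexed from 0 (row/column 1 of the
paper is index 0 here).\<close>

definition relu_mat :: "real mat \<Rightarrow> real mat" where
  "relu_mat Z = map_mat (\<lambda>x. max x 0) Z"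

definition hardmax :: "real mat \<Rightarrow> real mat" where
  "hardmax P = mat (dim_row P) (dim_col P) (\<lambda>(i,j).
     (let S = {k. k < dim_col P \<and> P $$ (i,k) = Max {P $$ (i,l) | l. l < dim_col P}}
      in if j \<in> S then 1 / real (card S) else 0))"

definition psi :: "real mat \<Rightarrow> real mat \<Rightarrow> real mat \<times> real mat \<times> real mat \<Rightarrow> real mat" where
  "psi X B h = (case h of (WQ, WK, WV) \<Rightarrow>
      B * hardmax (X * WQ * transpose_mat WK * transpose_mat X) * X * WV)"

definition sum_heads :: "real mat \<Rightarrow> real mat \<Rightarrow> (real mat \<times> real mat \<times> real mat) list \<Rightarrow> real mat" where
  "sum_heads X B hs = foldr (\<lambda>h acc. psi X B h + acc) hs (0\<^sub>m (dim_row X) (dim_col X))"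

definition f_attn :: "(real mat \<times> real mat \<times> real mat) list \<Rightarrow> (real mat \<times> real mat \<times> real mat) list
   \<Rightarrow> (real mat \<times> real mat \<times> real mat) list \<Rightarrow> real mat \<Rightarrow> real mat \<Rightarrow> real mat" where
  "f_attn HA HAT HI X At =
     sum_heads X At HA + sum_heads X (transpose_mat At) HAT + sum_heads X (1\<^sub>m (dim_row X)) HI + X"

definition f_mlp :: "real mat \<Rightarrow> real mat \<Rightarrow> real mat \<Rightarrow> real mat \<Rightarrow> real mat \<Rightarrow> real mat" where
  "f_mlp W1 W2 W3 W4 X = relu_mat (relu_mat (relu_mat (X * W1) * W2) * W3) * W4 + X"

definition tf_layer where
  "tf_layer HA HAT HI W1 W2 W3 W4 X At = f_mlp W1 W2 W3 W4 (f_attn HA HAT HI X At)"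

definition head_ok :: "nat \<Rightarrow> real mat \<times> real mat \<times> real mat \<Rightarrow> bool" where
  "head_ok d h = (case h of (WQ, WK, WV) \<Rightarrow>
      WQ \<in> carrier_mat d 2 \<and> WK \<in> carrier_mat d 2 \<and> WV \<in> carrier_mat d d)"

text \<open>Padded incidence matrix of a weighted hypergraph with n_v vertices and n_e edges,
 membership relation inc (vertex i in edge j, 1-based) and weights w.
 Paper entry (i+1,j+1) = A_ij, i.e. 0-based entry (i,j) for 1 <= i <= n_v, 1 <= j <= n_e.\<close>
definition padded_incidence :: "nat \<Rightarrow> nat \<Rightarrow> nat \<Rightarrow> (nat \<Rightarrow> nat \<Rightarrow> bool) \<Rightarrow> (nat \<Rightarrow> real) \<Rightarrow> real mat" where
  "padded_incidence K nv ne inc w = mat K K (\<lambda>(i,j).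
      if 1 \<le> i \<and> i \<le> nv \<and> 1 \<le> j \<and> j \<le> ne \<and> inc i j then w j else 0)"

definition compare_op :: "nat \<Rightarrow> nat \<Rightarrow> nat \<Rightarrow> real mat \<Rightarrow> real mat" where
  "compare_op C D E X = mat (dim_row X) (dim_col X) (\<lambda>(i,j).
      if j = E then (if X $$ (i,C) < X $$ (i,D) then 1 else 0) else X $$ (i,j))"

end

theory Submission
  imports Defs
begin

(* The attention head uses the query X[i,D] - X[i,C] and the key X[k,gl] - X[k,lo], which is
   +1 on the top row and -1 on all other rows, so row i of the score matrix is
   delta_i * (1, -1, ..., -1).  Its hardmax gives the top row the weight 1, 0 or 1/K according as
   delta_i > 0, delta_i < 0 or delta_i = 0, and since the B_global column is the first unit vector,
   the value matrix copies exactly this weight into a scratch column s.  No scaling of the scores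
   is needed.
   The MLP then reads the weight t from column s and, using X[i,gl] + X[i,lo] = 1 on every row,
   computes K/(K-1) * relu(t - 1/K), which maps 1, 1/K, 0 to 1, 0, 0.  It writes this into
   column E after erasing the old entry via x = relu x - relu (-x), and clears column s again. *)

definition hardmax_step :: "nat \<Rightarrow> real \<Rightarrow> real" where
  "hardmax_step m x = (if 0 < x then 1 else if x < 0 then 0 else 1 / real m)"

lemma hardmax_col0_sign_row:
  assumes P: "P \<in> carrier_mat n m" and m: "2 \<le> m" and i: "i < n"
    and row_i: "\<And>k. k < m \<Longrightarrow> P $$ (i,k) = (if k = 0 then x else - x)"
  shows "hardmax P $$ (i,0) = hardmax_step m x"
proof -
  have "x = P $$ (i,0) \<and> 0 < m" "- x = P $$ (i,1) \<and> 1 < m"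
    using m row_i by auto
  then have "{x, - x} \<subseteq> {P $$ (i,l) | l. l < m}"
    by blast
  moreover have "{P $$ (i,l) | l. l < m} \<subseteq> {x, - x}"
    using row_i by auto
  ultimately have "{P $$ (i,l) | l. l < m} = {x, - x}"
    by blast
  then have max_row: "Max {P $$ (i,l) | l. l < m} = \<bar>x\<bar>"
    by (simp add: abs_if max_def)
  define S where "S = {k. k < m \<and> P $$ (i,k) = \<bar>x\<bar>}"
  have hm: "hardmax P $$ (i,0) = (if 0 \<in> S then 1 / real (card S) else 0)"
    using P m i by (simp add: hardmax_def max_row S_def)
  consider "0 < x" | "x < 0" | "x = 0" by linarith
  then show ?thesis
  proof cases
    case 1
    then have "S = {0}" using m by (auto simp: S_def row_i split: if_splits)
    then show ?thesis using hm 1 by (simp add: hardmax_step_def)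
  next
    case 2
    then have "0 \<notin> S" using m by (simp add: S_def row_i)
    then show ?thesis using hm 2 by (simp add: hardmax_step_def)
  next
    case 3
    then have "S = {..<m}" by (auto simp: S_def row_i)
    then show ?thesis using hm 3 m by (simp add: hardmax_step_def)
  qed
qed

lemma hardmax_step_nonneg: "0 \<le> hardmax_step m x"
  by (simp add: hardmax_step_def)

lemma hardmax_step_threshold:
  assumes "2 \<le> m"
  shows "real m / (real m - 1) * max (hardmax_step m x - 1 / real m) 0 = (if 0 < x then 1 else 0)"
  using assms by (simp add: hardmax_step_def field_simps)

lemma dim_hardmax [simp]:
  "dim_row (hardmax P) = dim_row P" "dim_col (hardmax P) = dim_col P"
  by (simp_all add: hardmax_def)

lemma hardmax_carrier_mat: "P \<in> carrier_mat n m \<Longrightarrow> hardmax P \<in> carrier_mat n m"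
  unfolding carrier_mat_def by simp

lemma index_relu_mat [simp]:
  "i < dim_row A \<Longrightarrow> j < dim_col A \<Longrightarrow> relu_mat A $$ (i,j) = max (A $$ (i,j)) 0"
  "dim_row (relu_mat A) = dim_row A" "dim_col (relu_mat A) = dim_col A"
  by (simp_all add: relu_mat_def)

lemma relu_mat_idem: "relu_mat (relu_mat A) = relu_mat A"
  by (rule eq_matI) simp_all

lemma mat_of_cols_pair_carrier: "mat_of_cols d [u, v] \<in> carrier_mat d 2"
  using mat_of_cols_carrier(1)[of d "[u, v]"] by (simp add: numeral_2_eq_2)

lemma index_mult_mat_of_cols:
  assumes "A \<in> carrier_mat n d" "i < n" "j < length cs" "set cs \<subseteq> carrier_vec d"
  shows "(A * mat_of_cols d cs) $$ (i,j) = row A i \<bullet> cs ! j"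
proof -
  have "cs ! j \<in> carrier_vec d"
    using assms(3,4) nth_mem by blast
  then show ?thesis
    using assms(1-3) by simp
qed

lemma index_mult_mat_of_rows:
  assumes "A \<in> carrier_mat n (length rs)" "i < n" "j < d"
  shows "(A * mat_of_rows d rs) $$ (i,j) = (\<Sum>r<length rs. A $$ (i,r) * rs ! r $ j)"
  using assms by (auto simp: scalar_prod_def mat_of_rows_def lessThan_atLeast0 intro!: sum.cong)

lemma row_scalar_prod_unit_diff:
  fixes A :: "'a :: ring_1 mat"
  assumes "A \<in> carrier_mat n d" "i < n" "a < d" "b < d"
  shows "row A i \<bullet> (unit_vec d a - unit_vec d b) = A $$ (i,a) - A $$ (i,b)"
  using assms by (simp add: scalar_prod_minus_distrib[of _ d])

lemma index_rank_one_scores: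
  fixes X :: "real mat"
  assumes X: "X \<in> carrier_mat n d" and qu: "q \<in> carrier_vec d" "u \<in> carrier_vec d"
    and ik: "i < n" "k < n"
  shows "(X * mat_of_cols d [q, 0\<^sub>v d] * transpose_mat (mat_of_cols d [u, 0\<^sub>v d]) * transpose_mat X) $$ (i,k)
    = (row X i \<bullet> q) * (row X k \<bullet> u)"
proof -
  let ?Q = "mat_of_cols d [q, 0\<^sub>v d]" and ?U = "mat_of_cols d [u, 0\<^sub>v d]"
  have "X * ?Q * transpose_mat ?U * transpose_mat X = (X * ?Q) * (transpose_mat ?U * transpose_mat X)"
    by (rule assoc_mult_mat) (use X in auto)
  also have "transpose_mat ?U * transpose_mat X = transpose_mat (X * ?U)"
    by (rule transpose_mult[symmetric]) (use X in auto)
  finally have "(X * ?Q * transpose_mat ?U * transpose_mat X) $$ (i,k) = row (X * ?Q) i \<bullet> row (X * ?U) k"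
    using X ik by simp
  also have "\<dots> = (row X i \<bullet> q) * (row X k \<bullet> u)"
  proof -
    have "row (X * mat_of_cols d [v, 0\<^sub>v d]) j = vec 2 (\<lambda>c. if c = 0 then row X j \<bullet> v else 0)"
      if "v \<in> carrier_vec d" "j < n" for v j
      using that X by (intro eq_vecI) (auto simp: less_2_cases_iff)
    then show ?thesis
      using qu ik by (simp add: scalar_prod_def numeral_2_eq_2)
  qed
  finally show ?thesis .
qed

definition compare_head :: "nat \<Rightarrow> nat \<Rightarrow> nat \<Rightarrow> nat \<Rightarrow> nat \<Rightarrow> nat \<Rightarrow> real mat \<times> real mat \<times> real mat" where
  "compare_head d C D gl lo s =
    (mat_of_cols d [unit_vec d D - unit_vec d C, 0\<^sub>v d],
     mat_of_cols d [unit_vec d gl - unit_vec d lo, 0\<^sub>v d],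
     mat d d (\<lambda>(l,j). if l = gl \<and> j = s then 1 else 0))"

lemma head_ok_compare_head: "head_ok d (compare_head d C D gl lo s)"
  by (simp add: head_ok_def compare_head_def mat_of_cols_pair_carrier)

lemma hardmax_rank_one_scores:
  fixes X :: "real mat"
  assumes X: "X \<in> carrier_mat K d" and K: "2 \<le> K" and i: "i < K"
    and qu: "q \<in> carrier_vec d" "u \<in> carrier_vec d"
    and key: "\<And>k. k < K \<Longrightarrow> row X k \<bullet> u = (if k = 0 then 1 else -1)"
  shows "hardmax (X * mat_of_cols d [q, 0\<^sub>v d] * transpose_mat (mat_of_cols d [u, 0\<^sub>v d]) * transpose_mat X)
      $$ (i,0) = hardmax_step K (row X i \<bullet> q)"
    (is "hardmax ?P $$ _ = _")
proof (rule hardmax_col0_sign_row[OF _ K i])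
  show "?P \<in> carrier_mat K K"
    by (meson X mat_of_cols_pair_carrier mult_carrier_mat transpose_carrier_mat)
  show "?P $$ (i,k) = (if k = 0 then row X i \<bullet> q else - (row X i \<bullet> q))" if "k < K" for k
    using index_rank_one_scores[OF X qu i that] key[OF that] by simp
qed

lemma mult_one_hot_value:
  fixes H X :: "real mat"
  assumes H: "H \<in> carrier_mat K K" and X: "X \<in> carrier_mat K d" and K: "0 < K"
    and idx: "gl < d" "s < d" and col_gl: "col X gl = unit_vec K 0"
  shows "H * X * mat d d (\<lambda>(l,j). if l = gl \<and> j = s then 1 else 0)
    = mat K d (\<lambda>(i,j). if j = s then H $$ (i,0) else 0)"
proof -
  define WV :: "real mat" where "WV = mat d d (\<lambda>(l,j). if l = gl \<and> j = s then 1 else 0)"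
  have WV: "WV \<in> carrier_mat d d"
    by (simp add: WV_def)
  have col_WV: "col WV j = (if j = s then unit_vec d gl else 0\<^sub>v d)" if "j < d" for j
    using that by (intro eq_vecI) (auto simp: WV_def unit_vec_def)
  have "(H * X * WV) $$ (i,j) = (if j = s then H $$ (i,0) else 0)" if "i < K" "j < d" for i j
  proof -
    have HX: "H * X \<in> carrier_mat K d"
      using H X by simp
    have "(H * X * WV) $$ (i,j) = row (H * X) i \<bullet> col WV j"
      using that HX WV by (intro index_mult_mat(1)) auto
    also have "\<dots> = (if j = s then (H * X) $$ (i,gl) else 0)"
      using that H X idx by (simp add: col_WV)
    also have "(H * X) $$ (i,gl) = row H i \<bullet> unit_vec K 0"
      using that H X idx by (simp add: col_gl[symmetric])
    also have "\<dots> = H $$ (i,0)"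
      using that H K by simp
    finally show ?thesis .
  qed
  then show ?thesis
    unfolding WV_def[symmetric] using H X WV by (intro eq_matI) simp_all
qed

lemma psi_compare_head:
  fixes X :: "real mat"
  assumes X: "X \<in> carrier_mat K d" and K: "2 \<le> K"
    and idx: "C < d" "D < d" "gl < d" "lo < d" "s < d"
    and gl: "\<And>k. k < K \<Longrightarrow> X $$ (k,gl) = (if k = 0 then 1 else 0)"
    and lo: "\<And>k. k < K \<Longrightarrow> X $$ (k,lo) = (if k = 0 then 0 else 1)"
  shows "psi X (1\<^sub>m K) (compare_head d C D gl lo s)
    = mat K d (\<lambda>(i,j). if j = s then hardmax_step K (X $$ (i,D) - X $$ (i,C)) else 0)"
proof -
  define P where "P = X * mat_of_cols d [unit_vec d D - unit_vec d C, 0\<^sub>v d]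
    * transpose_mat (mat_of_cols d [unit_vec d gl - unit_vec d lo, 0\<^sub>v d]) * transpose_mat X"
  have H: "hardmax P \<in> carrier_mat K K"
    unfolding P_def
    by (meson X hardmax_carrier_mat mat_of_cols_pair_carrier mult_carrier_mat transpose_carrier_mat)
  have "col X gl = unit_vec K 0"
    using X gl K idx by (intro eq_vecI) auto
  then have "hardmax P * X * mat d d (\<lambda>(l,j). if l = gl \<and> j = s then 1 else 0)
      = mat K d (\<lambda>(i,j). if j = s then hardmax P $$ (i,0) else 0)"
    using H X K idx by (intro mult_one_hot_value) auto
  also have "\<dots> = mat K d (\<lambda>(i,j). if j = s then hardmax_step K (X $$ (i,D) - X $$ (i,C)) else 0)"
  proof -
    have "row X k \<bullet> (unit_vec d gl - unit_vec d lo) = (if k = 0 then 1 else -1)" if "k < K" for k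
      using X that idx gl lo by (simp add: row_scalar_prod_unit_diff)
    then have "hardmax P $$ (i,0) = hardmax_step K (X $$ (i,D) - X $$ (i,C))" if "i < K" for i
      unfolding P_def using X K that idx
      by (subst hardmax_rank_one_scores) (simp_all add: row_scalar_prod_unit_diff)
    then show ?thesis
      by (intro eq_matI) simp_all
  qed
  finally show ?thesis
    using H by (simp add: psi_def compare_head_def P_def[symmetric] left_mult_one_mat)
qed

lemma f_attn_compare_head:
  fixes X :: "real mat"
  assumes X: "X \<in> carrier_mat K d" and K: "2 \<le> K"
    and idx: "C < d" "D < d" "gl < d" "lo < d" "s < d"
    and gl: "\<And>k. k < K \<Longrightarrow> X $$ (k,gl) = (if k = 0 then 1 else 0)"
    and lo: "\<And>k. k < K \<Longrightarrow> X $$ (k,lo) = (if k = 0 then 0 else 1)"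
  shows "f_attn [] [] [compare_head d C D gl lo s] X At
    = mat K d (\<lambda>(i,j). X $$ (i,j) + (if j = s then hardmax_step K (X $$ (i,D) - X $$ (i,C)) else 0))"
  using X by (intro eq_matI)
    (simp_all add: f_attn_def sum_heads_def psi_compare_head[OF X K idx gl lo])

definition compare_mlp_in :: "nat \<Rightarrow> nat \<Rightarrow> nat \<Rightarrow> nat \<Rightarrow> nat \<Rightarrow> nat \<Rightarrow> real mat" where
  "compare_mlp_in K d E s gl lo = mat_of_cols d
     [unit_vec d E, - unit_vec d E, unit_vec d s,
      unit_vec d s - (1 / real K) \<cdot>\<^sub>v (unit_vec d gl + unit_vec d lo)]"

definition compare_mlp_out :: "nat \<Rightarrow> nat \<Rightarrow> nat \<Rightarrow> nat \<Rightarrow> real mat" where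
  "compare_mlp_out K d E s = mat_of_rows d
     [- unit_vec d E, unit_vec d E, - unit_vec d s, (real K / (real K - 1)) \<cdot>\<^sub>v unit_vec d E]"

lemma compare_mlp_in_carrier: "compare_mlp_in K d E s gl lo \<in> carrier_mat d 4"
  unfolding compare_mlp_in_def by (rule carrier_matI) (simp_all add: eval_nat_numeral)

lemma compare_mlp_out_carrier: "compare_mlp_out K d E s \<in> carrier_mat 4 d"
  unfolding compare_mlp_out_def by (rule carrier_matI) (simp_all add: eval_nat_numeral)

lemma index_relu_compare_mlp_in:
  fixes Y :: "real mat"
  assumes Y: "Y \<in> carrier_mat n d" and i: "i < n" and idx: "E < d" "s < d" "gl < d" "lo < d"
  shows "relu_mat (Y * compare_mlp_in K d E s gl lo) $$ (i,0) = max (Y $$ (i,E)) 0"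
    and "relu_mat (Y * compare_mlp_in K d E s gl lo) $$ (i,1) = max (- Y $$ (i,E)) 0"
    and "relu_mat (Y * compare_mlp_in K d E s gl lo) $$ (i,2) = max (Y $$ (i,s)) 0"
    and "relu_mat (Y * compare_mlp_in K d E s gl lo) $$ (i,3)
      = max (Y $$ (i,s) - (Y $$ (i,gl) + Y $$ (i,lo)) / real K) 0"
proof -
  have hidden: "relu_mat (Y * compare_mlp_in K d E s gl lo) $$ (i,r)
    = max (row Y i \<bullet> [unit_vec d E, - unit_vec d E, unit_vec d s,
        unit_vec d s - (1 / real K) \<cdot>\<^sub>v (unit_vec d gl + unit_vec d lo)] ! r) 0"
    if "r < 4" for r
    using that Y i unfolding compare_mlp_in_def
    by (subst index_mult_mat_of_cols[symmetric]) (auto simp: eval_nat_numeral)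
  have y: "row Y i \<in> carrier_vec d"
    using Y i by simp
  have "row Y i \<bullet> (- unit_vec d E) = - (row Y i \<bullet> unit_vec d E)"
    using Y by (intro scalar_prod_uminus_right) simp
  moreover have "row Y i \<bullet> (unit_vec d s - (1 / real K) \<cdot>\<^sub>v (unit_vec d gl + unit_vec d lo))
      = row Y i \<bullet> unit_vec d s - (1 / real K) * (row Y i \<bullet> unit_vec d gl + row Y i \<bullet> unit_vec d lo)"
    using y by (simp add: scalar_prod_minus_distrib[of _ d] scalar_prod_add_distrib[of _ d])
  ultimately show "relu_mat (Y * compare_mlp_in K d E s gl lo) $$ (i,0) = max (Y $$ (i,E)) 0"
    and "relu_mat (Y * compare_mlp_in K d E s gl lo) $$ (i,1) = max (- Y $$ (i,E)) 0"
    and "relu_mat (Y * compare_mlp_in K d E s gl lo) $$ (i,2) = max (Y $$ (i,s)) 0"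
    and "relu_mat (Y * compare_mlp_in K d E s gl lo) $$ (i,3)
      = max (Y $$ (i,s) - (Y $$ (i,gl) + Y $$ (i,lo)) / real K) 0"
    using Y i idx hidden[of 0] hidden[of 1] hidden[of 2] hidden[of 3] by simp_all
qed

lemma index_mult_compare_mlp_out:
  fixes Z :: "real mat"
  assumes Z: "Z \<in> carrier_mat n 4" and ij: "i < n" "j < d" and idx: "E < d" "s < d" "E \<noteq> s"
  shows "(Z * compare_mlp_out K d E s) $$ (i,j)
    = (if j = E then Z $$ (i,1) - Z $$ (i,0) + real K / (real K - 1) * Z $$ (i,3)
       else if j = s then - Z $$ (i,2) else 0)"
proof -
  let ?rs = "[- unit_vec d E, unit_vec d E, - unit_vec d s, (real K / (real K - 1)) \<cdot>\<^sub>v unit_vec d E]"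
  have sum4: "(\<Sum>r<4. f r) = f 0 + f 1 + f 2 + f 3" for f :: "nat \<Rightarrow> real"
    by (simp add: eval_nat_numeral)
  have "(Z * mat_of_rows d ?rs) $$ (i,j) = (\<Sum>r<4. Z $$ (i,r) * ?rs ! r $ j)"
    using index_mult_mat_of_rows[of Z n ?rs i j d] Z ij by (simp add: eval_nat_numeral)
  then show ?thesis
    using ij idx by (simp add: compare_mlp_out_def sum4)
qed

lemma compare_mlp_output:
  fixes X :: "real mat" and t :: "nat \<Rightarrow> real"
  assumes X: "X \<in> carrier_mat K d" and K: "2 \<le> K"
    and idx: "E < d" "s < d" "gl < d" "lo < d"
    and dist: "E \<noteq> s" "gl \<noteq> s" "lo \<noteq> s"
    and scratch: "\<And>i. i < K \<Longrightarrow> X $$ (i,s) = 0"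
    and ones: "\<And>i. i < K \<Longrightarrow> X $$ (i,gl) + X $$ (i,lo) = 1"
    and Y: "Y = mat K d (\<lambda>(i,j). X $$ (i,j) + (if j = s then hardmax_step K (t i) else 0))"
  shows "relu_mat (Y * compare_mlp_in K d E s gl lo) * compare_mlp_out K d E s + Y
    = mat K d (\<lambda>(i,j). if j = E then (if 0 < t i then 1 else 0) else X $$ (i,j))"
proof (rule eq_matI)
  define Z where "Z = relu_mat (Y * compare_mlp_in K d E s gl lo)"
  have Yc: "Y \<in> carrier_mat K d"
    by (simp add: Y)
  have Z: "Z \<in> carrier_mat K 4"
    using Yc compare_mlp_in_carrier unfolding Z_def carrier_mat_def by simp
  have W4: "compare_mlp_out K d E s \<in> carrier_mat 4 d"
    by (rule compare_mlp_out_carrier)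
  fix i j
  assume "i < dim_row (mat K d (\<lambda>(i,j). if j = E then (if 0 < t i then 1 else 0) else X $$ (i,j)))"
    and "j < dim_col (mat K d (\<lambda>(i,j). if j = E then (if 0 < t i then 1 else 0) else X $$ (i,j)))"
  then have ij: "i < K" "j < d"
    by simp_all
  have Zi: "Z $$ (i,0) = max (X $$ (i,E)) 0" "Z $$ (i,1) = max (- X $$ (i,E)) 0"
    "Z $$ (i,2) = hardmax_step K (t i)" "Z $$ (i,3) = max (hardmax_step K (t i) - 1 / real K) 0"
    using index_relu_compare_mlp_in[OF Yc ij(1) idx, of K] ij idx dist ones[OF ij(1)]
    by (simp_all add: Z_def Y scratch hardmax_step_nonneg)
  have "- max x 0 + max (- x) 0 = - x" for x :: real
    by (simp add: max_def)
  then have "(Z * compare_mlp_out K d E s) $$ (i,j)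
      = (if j = E then (if 0 < t i then 1 else 0) - X $$ (i,E)
         else if j = s then - hardmax_step K (t i) else 0)"
    unfolding index_mult_compare_mlp_out[OF Z ij idx(1,2) dist(1)] Zi
    using hardmax_step_threshold[OF K, of "t i"] by (simp add: mult.commute)
  moreover have "(Z * compare_mlp_out K d E s + Y) $$ (i,j)
      = (Z * compare_mlp_out K d E s) $$ (i,j) + Y $$ (i,j)"
    using ij Z W4 Yc by simp
  ultimately show "(relu_mat (Y * compare_mlp_in K d E s gl lo) * compare_mlp_out K d E s + Y) $$ (i,j)
      = mat K d (\<lambda>(i,j). if j = E then (if 0 < t i then 1 else 0) else X $$ (i,j)) $$ (i,j)"
    unfolding Z_def[symmetric] using ij dist scratch[OF ij(1)] by (simp add: Y)
qed (use compare_mlp_out_carrier in \<open>simp_all add: Y\<close>)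

lemma f_mlp_identity_hidden:
  assumes "W1 \<in> carrier_mat d h"
  shows "f_mlp W1 (1\<^sub>m h) (1\<^sub>m h) W4 X = relu_mat (X * W1) * W4 + X"
  using assms by (simp add: f_mlp_def relu_mat_idem)

lemma tf_layer_compare:
  fixes X :: "real mat"
  assumes X: "X \<in> carrier_mat K d" and K: "2 \<le> K"
    and idx: "C < d" "D < d" "E < d" "gl < d" "lo < d" "s < d"
    and dist: "E \<noteq> s" "gl \<noteq> s" "lo \<noteq> s"
    and gl: "\<And>i. i < K \<Longrightarrow> X $$ (i,gl) = (if i = 0 then 1 else 0)"
    and lo: "\<And>i. i < K \<Longrightarrow> X $$ (i,lo) = (if i = 0 then 0 else 1)"
    and scratch: "\<And>i. i < K \<Longrightarrow> X $$ (i,s) = 0"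
  shows "tf_layer [] [] [compare_head d C D gl lo s] (compare_mlp_in K d E s gl lo) (1\<^sub>m 4) (1\<^sub>m 4)
      (compare_mlp_out K d E s) X At = compare_op C D E X"
proof -
  have "tf_layer [] [] [compare_head d C D gl lo s] (compare_mlp_in K d E s gl lo) (1\<^sub>m 4) (1\<^sub>m 4)
      (compare_mlp_out K d E s) X At
    = mat K d (\<lambda>(i,j). if j = E then (if 0 < X $$ (i,D) - X $$ (i,C) then 1 else 0) else X $$ (i,j))"
    unfolding tf_layer_def f_mlp_identity_hidden[OF compare_mlp_in_carrier]
    using idx dist gl lo scratch
    by (intro compare_mlp_output[OF X K]) (simp_all add: f_attn_compare_head[OF X K])
  also have "\<dots> = compare_op C D E X"
    using X by (intro eq_matI) (auto simp: compare_op_def)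
  finally show ?thesis .
qed

theorem lemmaC3:
  fixes \<Omega> :: real and K d C D E gl lo :: nat and Scr :: "nat set"
  assumes "\<Omega> > 0"
    and "C < d" and "D < d" and "E < d" and "gl < d" and "lo < d"
    and "Scr \<noteq> {}" and "Scr \<subseteq> {..<d}"
    and "gl \<noteq> lo" and "gl \<notin> Scr" and "lo \<notin> Scr"
    and "E \<noteq> gl" and "E \<noteq> lo" and "E \<notin> Scr"
  shows "\<exists>HA HAT HI W1 W2 W3 W4 h1 h2 h3.
     (\<forall>h\<in>set HA. head_ok d h) \<and> (\<forall>h\<in>set HAT. head_ok d h) \<and> (\<forall>h\<in>set HI. head_ok d h) \<and>
     W1 \<in> carrier_mat d h1 \<and> W2 \<in> carrier_mat h1 h2 \<and> W3 \<in> carrier_mat h2 h3 \<and>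
     W4 \<in> carrier_mat h3 d \<and>
     (\<forall>X nv ne inc w.
        X \<in> carrier_mat K d \<and>
        1 \<le> nv \<and> max nv ne + 1 \<le> K \<and>
        (\<forall>i<K. \<forall>j<d. \<bar>X $$ (i,j)\<bar> \<le> \<Omega>) \<and>
        (\<forall>i<K. X $$ (i,gl) = (if i = 0 then 1 else 0)) \<and>
        (\<forall>i<K. X $$ (i,lo) = (if i = 0 then 0 else 1)) \<and>
        (\<forall>s\<in>Scr. \<forall>i<K. X $$ (i,s) = 0)
        \<longrightarrow> tf_layer HA HAT HI W1 W2 W3 W4 X (padded_incidence K nv ne inc w)
              = compare_op C D E X)"
proof -
  obtain s where s: "s \<in> Scr"
    using assms by auto
  then have s_idx: "s < d" "E \<noteq> s" "gl \<noteq> s" "lo \<noteq> s"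
    using assms by auto
  show ?thesis
    by (rule exI[of _ "[]"], rule exI[of _ "[]"], rule exI[of _ "[compare_head d C D gl lo s]"],
        rule exI[of _ "compare_mlp_in K d E s gl lo"], rule exI[of _ "1\<^sub>m 4"], rule exI[of _ "1\<^sub>m 4"],
        rule exI[of _ "compare_mlp_out K d E s"], rule exI[of _ 4], rule exI[of _ 4], rule exI[of _ 4])
      (use s s_idx assms in \<open>auto simp: head_ok_compare_head compare_mlp_in_carrier
        compare_mlp_out_carrier intro!: tf_layer_compare\<close>)
qed

end
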